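(* Let $p\in\mathbb{N}$. Let $g:\mathcal{S}_{++}^p\to[0,\infty)$ be a matrix-variate Bernstein function with triplet $(0_{p\times p},B,\mu)$, where $\mu$ is a probability measure on $\mathcal{S}_{++}^p$. If the map $\phi:[0,\infty)\to[0,\infty)$ is continuous, completely monotone on $(0,\infty)$ and satisfies $\phi(0)=1$, then the composition $\psi=\phi\circ g:\mathcal{S}_{++}^p\to[0,\infty)$ is a matrix-variate completely monotone function.
   Context: $\mathcal{S}^p$, $\mathcal{S}_+^p$, $\mathcal{S}_{++}^p$ denote the real symmetric, symmetric nonnegative definite, and symmetric positive definite $p\times p$ matrices; $\mathrm{etr}(\cdot)=\exp\{\mathrm{tr}(\cdot)\}$. A map $\phi:(0,\infty)\to[0,\infty)$ is completely monotone if it is infinitely differentiable and $(-1)^n\phi^{(n)}\ge 0$ for all $n\in\mathbb{N}$. A map $\psi:\mathcal{S}_{++}^p\to[0,\infty)$ is matrix-variate completely monotone if there is a measure $\nu$ on $\mathcal{S}_+^p$ with $\psi(T)=\int_{\mathcal{S}_+^p}\mathrm{etr}(-TX)\,\nu(\mathrm{d}X)$ for all $T\in\mathcal{S}_{++}^p$. A map $g:\mathcal{S}_{++}^p\to[0,\infty)$ is a matrix-variate Bernstein function with triplet $(A,B,\mu)$ if $A,B\in\mathcal{S}_+^p$, $\mu$ is a measure on $\mathcal{S}_{++}^p$ with $\int_{\mathcal{S}_{++}^p}\min[1,\{\mathrm{tr}(X^2)\}^{1/2}]\,\mu(\mathrm{d}X)<\infty$, and for all $T\in\mathcal{S}_{++}^p$,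 $g(T)=\mathrm{tr}(A)+\mathrm{tr}(BT)+\int_{\mathcal{S}_{++}^p}\{1-\mathrm{etr}(-TX)\}\,\mu(\mathrm{d}X)$. *)

theory Defs
  imports "HOL-Analysis.Analysis" "HOL-Probability.Probability"
begin

text \<open>p x p real matrices are modelled as real^'p^'p, with 'p a finite index type (p = CARD('p)).\<close>

definition etr :: "real^'p^'p \<Rightarrow> real" where
  "etr M = exp (trace M)"

definition Sym :: "(real^'p^'p) set" where
  "Sym = {A. transpose A = A}"

definition Spsd :: "(real^'p^'p) set" where
  "Spsd = {A. A \<in> Sym \<and> (\<forall>x. 0 \<le> x \<bullet> (A *v x))}"

definition Spd :: "(real^'p^'p) set" where
  "Spd = {A. A \<in> Sym \<and> (\<forall>x. x \<noteq> 0 \<longrightarrow> 0 < x \<bullet> (A *v x))}"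

definition completely_monotone :: "(real \<Rightarrow> real) \<Rightarrow> bool" where
  "completely_monotone \<phi> \<longleftrightarrow>
     (\<forall>n. \<forall>x>0. ((deriv ^^ n) \<phi>) differentiable (at x)) \<and>
     (\<forall>n. \<forall>x>0. 0 \<le> (-1) ^ n * (deriv ^^ n) \<phi> x)"

definition mv_completely_monotone :: "(real^'p^'p \<Rightarrow> real) \<Rightarrow> bool" where
  "mv_completely_monotone \<psi> \<longleftrightarrow>
     (\<forall>T\<in>Spd. 0 \<le> \<psi> T) \<and>
     (\<exists>\<nu>::(real^'p^'p) measure. sets \<nu> = sets (restrict_space borel Spsd) \<and>
        (\<forall>T\<in>Spd. ennreal (\<psi> T) = (\<integral>\<^sup>+ X. ennreal (etr (- (T ** X))) \<partial>\<nu>)))"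

definition mv_bernstein ::
  "(real^'p^'p \<Rightarrow> real) \<Rightarrow> real^'p^'p \<Rightarrow> real^'p^'p \<Rightarrow> (real^'p^'p) measure \<Rightarrow> bool" where
  "mv_bernstein g A B \<mu> \<longleftrightarrow>
     A \<in> Spsd \<and> B \<in> Spsd \<and>
     sets \<mu> = sets (restrict_space borel Spd) \<and>
     (\<integral>\<^sup>+ X. ennreal (min 1 (sqrt (trace (X ** X)))) \<partial>\<mu>) < \<infinity> \<and>
     (\<forall>T\<in>Spd. 0 \<le> g T \<and>
        g T = trace A + trace (B ** T) + (\<integral> X. (1 - etr (- (T ** X))) \<partial>\<mu>))"

end

theory Submission
  imports Defs "HOL-Computational_Algebra.Polynomial"
begin

(* By Bernstein's theorem, phi(t) = int exp(-t s) rho(ds) for a probability measure rho on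
   [0, infinity).  It is proved through the Hausdorff moment problem: the iterated differences
   of phi on the grid of mesh 1/2^n are the weights of discrete probability measures whose
   moments approximate phi at dyadic points; a weak limit point (Helly) has exactly these
   moments, and rho is its image under -ln.
   With L(T) = int etr(-TX) mu(dX) we have g(T) = tr(BT) + 1 - L(T), so
   exp(-s g(T)) = exp(-s tr(BT)) * sum_k exp(-s) s^k/k! L(T)^k, and L(T)^k is the Laplace
   transform of the k-th convolution power of mu.  Integrating in s against rho shows that
   phi(g(T)) is the Laplace transform of the law of sB + X_1 + ... + X_N, where s ~ rho, the
   X_i ~ mu are independent and N is Poisson with mean s; this law lives on the psd cone. *)

section \<open>Positive semidefinite matrices\<close>

lemma matrix_vector_mult_axis_component:
  "((A::real^'n^'m) *v axis j c) $ i = A$i$j * c"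
  by (simp add: matrix_vector_mult_def axis_def if_distrib cong: if_cong)

lemma quadratic_form_add:
  "(x + y) \<bullet> ((A::real^'n^'n) *v (x + y)) =
     x \<bullet> (A *v x) + x \<bullet> (A *v y) + y \<bullet> (A *v x) + y \<bullet> (A *v y)"
  by (simp add: matrix_vector_right_distrib inner_add_left inner_add_right)

lemma symmetric_bilinear_commute:
  "transpose A = A \<Longrightarrow> x \<bullet> ((A::real^'n^'n) *v y) = y \<bullet> (A *v x)"
  by (metis dot_lmul_matrix inner_commute transpose_transpose vector_transpose_matrix)

lemma trace_mult_outer:
  "trace ((T::real^'n^'n) ** (\<chi> i j. u$i * u$j)) = u \<bullet> (T *v u)"
  by (simp add: trace_def matrix_matrix_mult_def inner_vec_def matrix_vector_mult_def
      sum_distrib_left sum_distrib_right mult_ac)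

lemma outer_mult_vector: "(\<chi> i j. u$i * v$j) *v x = (v \<bullet> x) *\<^sub>R (u::real^'n)"
  by (simp add: vec_eq_iff matrix_vector_mult_def inner_vec_def sum_distrib_left mult_ac)

lemma matrix_mult_scaleR_right:
  "(A::real^'n^'m) ** (c *\<^sub>R B) = c *\<^sub>R (A ** (B::real^'k^'n))"
  by (simp add: matrix_matrix_mult_def vec_eq_iff sum_distrib_left mult_ac)

lemma trace_scaleR: "trace (c *\<^sub>R (A::real^'n^'n)) = c * trace A"
  by (simp add: trace_def sum_distrib_left)

lemma Spsd_symmetric_entries:
  assumes "(X::real^'n^'n) \<in> Spsd"
  shows "X $ i $ j = X $ j $ i"
proof -
  have "transpose X = X" using assms by (simp add: Spsd_def Sym_def)
  then show ?thesis by (metis transpose_def vec_lambda_beta)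
qed

lemma Spsd_diag_nonneg:
  assumes "(X::real^'n^'n) \<in> Spsd"
  shows "0 \<le> X$a$a"
proof -
  have "0 \<le> axis a 1 \<bullet> (X *v axis a 1)"
    using assms by (simp add: Spsd_def)
  then show ?thesis
    by (simp add: inner_axis' matrix_vector_mult_axis_component)
qed

lemma Spsd_diag_zero_imp_row_zero:
  assumes X: "(X::real^'n^'n) \<in> Spsd" and diag: "X$a$a = 0"
  shows "X$a$j = 0"
proof (rule ccontr)
  assume nz: "X$a$j \<noteq> 0"
  have form: "(axis a t + axis j 1) \<bullet> (X *v (axis a t + axis j 1)) = 2 * t * X$a$j + X$j$j"
    for t
    using diag Spsd_symmetric_entries[OF X, of j a]
    by (simp add: quadratic_form_add inner_axis' matrix_vector_mult_axis_component)
  define t where "t = - (X$j$j + 1) / (2 * X$a$j)"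
  have "0 \<le> (axis a t + axis j 1) \<bullet> (X *v (axis a t + axis j 1))"
    using X by (simp add: Spsd_def)
  then have "0 \<le> 2 * t * X$a$j + X$j$j"
    by (simp only: form)
  moreover have "2 * t * X$a$j = - (X$j$j + 1)"
    using nz by (simp add: t_def field_simps)
  ultimately show False by linarith
qed

lemma Spsd_minus_rank_one:
  fixes X :: "real^'n^'n"
  assumes X: "X \<in> Spsd" and pos: "0 < X$a$a"
  defines "Y \<equiv> X - (1 / X$a$a) *\<^sub>R (\<chi> i j. X$i$a * X$j$a)"
  shows "Y \<in> Spsd" and "Y$a$j = 0" and "(\<And>j. X$i$j = 0) \<Longrightarrow> Y$i$j = 0"
proof -
  define d where "d = X$a$a"
  define u where "u = (\<chi> i. X$i$a)"
  have Y: "Y = X - (1 / d) *\<^sub>R (\<chi> i j. u$i * u$j)" by (simp add: Y_def d_def u_def)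
  have sym: "transpose X = X" using X by (simp add: Spsd_def Sym_def)
  have Xa: "X *v axis a 1 = u"
    by (simp add: vec_eq_iff matrix_vector_mult_axis_component u_def)
  have "0 \<le> x \<bullet> (Y *v x)" for x
  proof -
    \<comment> \<open>Complete the square: evaluate the form of \<open>X\<close> at \<open>x - c e\<^sub>a\<close>.\<close>
    define c where "c = (u \<bullet> x) / d"
    have a1: "x \<bullet> (X *v ((- c) *\<^sub>R axis a 1)) = - c * (u \<bullet> x)"
      by (subst matrix_vector_mult_scaleR) (simp add: Xa inner_commute)
    have a2: "((- c) *\<^sub>R axis a 1) \<bullet> (X *v x) = - c * (u \<bullet> x)"
      using a1 symmetric_bilinear_commute[OF sym] by metis
    have a3: "((- c) *\<^sub>R axis a 1) \<bullet> (X *v ((- c) *\<^sub>R axis a 1)) = c^2 * d"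
      by (subst matrix_vector_mult_scaleR)
        (simp add: Xa inner_axis' power2_eq_square u_def d_def)
    have "0 \<le> (x + (- c) *\<^sub>R axis a 1) \<bullet> (X *v (x + (- c) *\<^sub>R axis a 1))"
      using X by (simp add: Spsd_def)
    also have "\<dots> = x \<bullet> (X *v x) - (u \<bullet> x)^2 / d"
      unfolding quadratic_form_add a1 a2 a3
      using pos by (simp add: c_def d_def power2_eq_square field_simps)
    also have "\<dots> = x \<bullet> (Y *v x)"
      by (simp add: Y matrix_vector_mult_diff_rdistrib matrix_scaleR_vector_ac[symmetric]
          matrix_vector_mult_scaleR outer_mult_vector inner_diff_right power2_eq_square inner_commute)
    finally show ?thesis .
  qed
  moreover have "transpose Y = Y"
    by (simp add: Y transpose_def vec_eq_iff mult.commute Spsd_symmetric_entries[OF X])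
  ultimately show "Y \<in> Spsd" by (simp add: Spsd_def Sym_def)
  show "Y$a$j = 0"
    using pos by (simp add: Y_def Spsd_symmetric_entries[OF X, of j a])
  show "Y$i$j = 0" if "\<And>j. X$i$j = 0"
    using that by (simp add: Y_def)
qed

lemma trace_mult_Spsd_nonneg_rows:
  fixes T X :: "real^'n^'n"
  assumes T: "T \<in> Spsd" and "finite S" and "X \<in> Spsd"
    and "\<And>i j. i \<notin> S \<Longrightarrow> X$i$j = 0"
  shows "0 \<le> trace (T ** X)"
  using assms(2-)
proof (induction S arbitrary: X rule: finite_induct)
  case empty
  then have "X = 0" by (simp add: vec_eq_iff)
  then show ?case by (simp add: trace_def)
next
  case (insert a S)
  note X = \<open>X \<in> Spsd\<close>
  show ?case
  proof (cases "X$a$a = 0")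
    case True
    then have "X$i$j = 0" if "i \<notin> S" for i j
      using insert.prems(2) that Spsd_diag_zero_imp_row_zero[OF X True] by (cases "i = a") simp_all
    then show ?thesis by (rule insert.IH[OF X])
  next
    case False
    \<comment> \<open>Split off the rank-one part carried by row \<open>a\<close>; what remains vanishes on row \<open>a\<close>.\<close>
    define c where "c = 1 / X$a$a"
    define P where "P = (\<chi> i j. X$i$a * X$j$a)"
    define Y where "Y = X - c *\<^sub>R P"
    have pos: "0 < X$a$a" using False Spsd_diag_nonneg[OF X, of a] by linarith
    note Y = Spsd_minus_rank_one[OF X pos, folded c_def P_def Y_def]
    have "Y$i$j = 0" if "i \<notin> S" for i j
    proof (cases "i = a")
      case False
      then have "X$i$j = 0" for j using insert.prems(2) that by simp
      then show ?thesis by (rule Y(3))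
    qed (simp add: Y(2))
    with Y(1) have "0 \<le> trace (T ** Y)" by (rule insert.IH)
    moreover have "0 \<le> trace (T ** P)"
      using T trace_mult_outer[of T "\<chi> i. X$i$a"] by (simp add: Spsd_def P_def)
    moreover have "0 \<le> c" using pos by (simp add: c_def)
    moreover have "X = Y + c *\<^sub>R P" by (simp add: Y_def)
    then have "trace (T ** X) = trace (T ** Y) + c * trace (T ** P)"
      by (simp add: matrix_add_ldistrib trace_add matrix_mult_scaleR_right trace_scaleR)
    ultimately show ?thesis by (metis add_nonneg_nonneg mult_nonneg_nonneg)
  qed
qed

lemma trace_mult_Spsd_nonneg:
  "(T::real^'n^'n) \<in> Spsd \<Longrightarrow> X \<in> Spsd \<Longrightarrow> 0 \<le> trace (T ** X)"
  using trace_mult_Spsd_nonneg_rows[of T UNIV X] by simp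

lemma Spsd_add: "A \<in> Spsd \<Longrightarrow> B \<in> Spsd \<Longrightarrow> A + B \<in> Spsd"
  by (simp add: Spsd_def Sym_def transpose_def vec_eq_iff matrix_vector_mult_add_rdistrib
      inner_add_right add_nonneg_nonneg)

lemma Spsd_scaleR: "A \<in> Spsd \<Longrightarrow> 0 \<le> c \<Longrightarrow> c *\<^sub>R A \<in> Spsd"
  by (simp add: Spsd_def Sym_def transpose_def vec_eq_iff matrix_scaleR_vector_ac[symmetric]
      matrix_vector_mult_scaleR)

lemma zero_in_Spsd: "0 \<in> Spsd"
  by (simp add: Spsd_def Sym_def transpose_def vec_eq_iff)

lemma Spd_subset_Spsd: "Spd \<subseteq> Spsd"
  by (auto simp: Spd_def Spsd_def) (metis inner_zero_left less_eq_real_def)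

lemma closed_Spsd: "closed (Spsd :: (real^'n^'n) set)"
proof -
  have eq: "Spsd = (\<Inter>i. \<Inter>j. {A::real^'n^'n. A$i$j = A$j$i}) \<inter> (\<Inter>x. {A. 0 \<le> x \<bullet> (A *v x)})"
    by (auto simp: Spsd_def Sym_def transpose_def vec_eq_iff)
  have "closed {A::real^'n^'n. A$i$j = A$j$i}" for i j
    by (intro closed_Collect_eq continuous_intros)
  moreover have "closed {A::real^'n^'n. 0 \<le> x \<bullet> (A *v x)}" for x
    by (simp add: inner_vec_def matrix_vector_mult_def)
      (intro closed_Collect_le continuous_intros)
  ultimately show ?thesis unfolding eq by (intro closed_Int closed_INT ballI)
qed

lemma Spsd_in_borel [measurable]: "(Spsd :: (real^'n^'n) set) \<in> sets borel"
  using closed_Spsd by (rule borel_closed)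

lemma etr_neg_mult: "etr (- ((T::real^'n^'n) ** X)) = exp (- trace (T ** X))"
  by (simp add: etr_def trace_def sum_negf)

lemma etr_neg_mult_add:
  "etr (- ((T::real^'n^'n) ** (X + Y))) = etr (- (T ** X)) * etr (- (T ** Y))"
  unfolding etr_neg_mult by (simp add: matrix_add_ldistrib trace_add exp_add[symmetric])

lemma borel_measurable_etr_neg_mult [measurable]:
  "(\<lambda>X. etr (- ((T::real^'n^'n) ** X))) \<in> borel_measurable borel"
proof -
  have "continuous_on UNIV (\<lambda>X. exp (- trace ((T::real^'n^'n) ** X)))"
    by (simp add: trace_def matrix_matrix_mult_def) (intro continuous_intros)
  then show ?thesis
    unfolding etr_neg_mult by (rule borel_measurable_continuous_onI)
qed

lemma etr_nonneg [simp]: "0 \<le> etr M"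
  by (simp add: etr_def)

lemma etr_neg_mult_le_1: "T \<in> Spsd \<Longrightarrow> X \<in> Spsd \<Longrightarrow> etr (- ((T::real^'n^'n) ** X)) \<le> 1"
  using trace_mult_Spsd_nonneg[of T X] by (simp add: etr_neg_mult)

lemma integrable_etr_neg_mult:
  fixes T :: "real^'n^'n"
  assumes "prob_space M" and "sets M = sets borel" and "AE X in M. X \<in> Spsd" and "T \<in> Spsd"
  shows "integrable M (\<lambda>X. etr (- (T ** X)))"
proof -
  interpret prob_space M by (rule assms(1))
  show ?thesis
  proof (rule integrable_const_bound[where B = 1])
    show "AE X in M. norm (etr (- (T ** X))) \<le> 1"
      using assms(3) by eventually_elim (simp add: etr_neg_mult_le_1 assms(4))
  qed (simp add: measurable_cong_sets[OF assms(2) refl])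
qed

section \<open>Convolution powers\<close>

primrec conv_power :: "'a::{second_countable_topology, topological_monoid_add} measure \<Rightarrow> nat \<Rightarrow> 'a measure"
where
  "conv_power M 0 = return borel 0"
| "conv_power M (Suc k) = distr (M \<Otimes>\<^sub>M conv_power M k) borel (\<lambda>(x, y). x + y)"

lemma sets_conv_power [simp]: "sets (conv_power M k) = sets borel"
  by (cases k) simp_all

lemma measurable_pair_add:
  fixes M N :: "'a::{second_countable_topology, topological_monoid_add} measure"
  assumes "sets M = sets borel" and "sets N = sets borel"
  shows "(\<lambda>(x, y). x + y) \<in> measurable (M \<Otimes>\<^sub>M N) borel"
  by (subst measurable_cong_sets[OF sets_pair_measure_cong[OF assms] refl]) measurable

lemma prob_space_conv_power:
  assumes "prob_space M" and "sets M = sets borel"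
  shows "prob_space (conv_power M k)"
proof (induction k)
  case 0
  then show ?case by (simp add: prob_space_return)
next
  case (Suc k)
  interpret prob_space "M \<Otimes>\<^sub>M conv_power M k"
    by (intro prob_space_pair assms Suc)
  show ?case
    using prob_space_distr[OF measurable_pair_add[OF assms(2) sets_conv_power]] by simp
qed

lemma AE_conv_power:
  assumes M: "prob_space M" "sets M = sets borel" and AE: "AE x in M. x \<in> S"
    and S: "S \<in> sets borel" "0 \<in> S" "\<And>x y. x \<in> S \<Longrightarrow> y \<in> S \<Longrightarrow> x + y \<in> S"
  shows "AE x in conv_power M k. x \<in> S"
proof (induction k)
  case 0
  have "Measurable.pred borel (\<lambda>x. x \<in> S)" using S(1) by measurable
  then show ?case unfolding conv_power.simps by (subst AE_return) (simp_all add: S(2))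
next
  case (Suc k)
  interpret pair_sigma_finite M "conv_power M k"
    by (intro pair_sigma_finite.intro prob_space_imp_sigma_finite prob_space_conv_power M)
  have "AE p in M \<Otimes>\<^sub>M conv_power M k. fst p \<in> S \<and> snd p \<in> S"
  proof (rule AE_pair_measure)
    have "{p \<in> space (M \<Otimes>\<^sub>M conv_power M k). fst p \<in> S \<and> snd p \<in> S} = S \<times> S"
      by (auto simp: space_pair_measure sets_eq_imp_space_eq[OF M(2)]
          sets_eq_imp_space_eq[OF sets_conv_power])
    then show "{p \<in> space (M \<Otimes>\<^sub>M conv_power M k). fst p \<in> S \<and> snd p \<in> S}
        \<in> sets (M \<Otimes>\<^sub>M conv_power M k)"
      using S(1) by (simp add: M(2) pair_measureI)
    show "AE x in M. AE y in conv_power M k. fst (x, y) \<in> S \<and> snd (x, y) \<in> S"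
      using AE
    proof eventually_elim
      case (elim x)
      from Suc show ?case by eventually_elim (simp add: elim)
    qed
  qed
  then have "AE p in M \<Otimes>\<^sub>M conv_power M k. (case p of (x, y) \<Rightarrow> x + y) \<in> S"
    by eventually_elim (auto intro: S(3))
  then show ?case
    unfolding conv_power.simps
    by (subst AE_distr_iff[OF measurable_pair_add[OF M(2) sets_conv_power]]) (simp_all add: S(1))
qed

lemma nn_integral_conv_power:
  fixes f :: "'a::{second_countable_topology, topological_monoid_add} \<Rightarrow> ennreal"
  assumes M: "prob_space M" "sets M = sets borel" and f: "f \<in> borel_measurable borel"
    and f_0: "f 0 = 1" and f_add: "\<And>x y. f (x + y) = f x * f y"
  shows "(\<integral>\<^sup>+ x. f x \<partial>conv_power M k) = (\<integral>\<^sup>+ x. f x \<partial>M) ^ k"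
proof (induction k)
  case 0
  then show ?case by (simp add: nn_integral_return f f_0)
next
  case (Suc k)
  interpret sigma_finite_measure "conv_power M k"
    by (intro prob_space_imp_sigma_finite prob_space_conv_power M)
  have f_M: "f \<in> borel_measurable M" using f by (simp add: measurable_cong_sets[OF M(2) refl])
  have f_C: "f \<in> borel_measurable (conv_power M k)"
    using f by (simp add: measurable_cong_sets[OF sets_conv_power refl])
  have "(\<integral>\<^sup>+ z. f z \<partial>conv_power M (Suc k))
      = (\<integral>\<^sup>+ p. f (case p of (x, y) \<Rightarrow> x + y) \<partial>(M \<Otimes>\<^sub>M conv_power M k))"
    using measurable_pair_add[OF M(2) sets_conv_power] f by (simp add: nn_integral_distr)
  also have "\<dots> = (\<integral>\<^sup>+ x. \<integral>\<^sup>+ y. f x * f y \<partial>conv_power M k \<partial>M)"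
    using measurable_compose[OF measurable_pair_add[OF M(2) sets_conv_power] f]
    by (simp add: nn_integral_fst[symmetric] f_add split_beta')
  also have "\<dots> = (\<integral>\<^sup>+ x. f x * (\<integral>\<^sup>+ y. f y \<partial>conv_power M k) \<partial>M)"
    by (simp add: nn_integral_cmult[OF f_C])
  also have "\<dots> = (\<integral>\<^sup>+ x. f x \<partial>M) * (\<integral>\<^sup>+ y. f y \<partial>conv_power M k)"
    by (rule nn_integral_multc[OF f_M])
  finally show ?case using Suc by (simp add: mult.commute)
qed

lemma nn_integral_etr_conv_power:
  fixes T :: "real^'n^'n"
  assumes M: "prob_space M" "sets M = sets borel" "AE X in M. X \<in> Spsd" and "T \<in> Spsd"
  shows "(\<integral>\<^sup>+ X. etr (- (T ** X)) \<partial>conv_power M k) = ennreal ((\<integral>X. etr (- (T ** X)) \<partial>M) ^ k)"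
proof -
  have "(\<integral>\<^sup>+ X. etr (- (T ** X)) \<partial>conv_power M k) = (\<integral>\<^sup>+ X. etr (- (T ** X)) \<partial>M) ^ k"
  proof (rule nn_integral_conv_power[OF M(1,2)])
    show "ennreal (etr (- (T ** 0))) = 1" by (simp add: etr_def trace_def)
  qed (simp_all add: etr_neg_mult_add ennreal_mult)
  also have "(\<integral>\<^sup>+ X. etr (- (T ** X)) \<partial>M) = ennreal (\<integral>X. etr (- (T ** X)) \<partial>M)"
    by (intro nn_integral_eq_integral integrable_etr_neg_mult assms) simp
  finally show ?thesis
    by (simp add: ennreal_power integral_nonneg)
qed

section \<open>Finite differences of completely monotone functions\<close>

primrec neg_fdiff :: "real \<Rightarrow> nat \<Rightarrow> (real \<Rightarrow> real) \<Rightarrow> real \<Rightarrow> real" where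
  "neg_fdiff h 0 f x = f x"
| "neg_fdiff h (Suc m) f x = neg_fdiff h m f x - neg_fdiff h m f (x + h)"

lemma has_real_derivative_neg_fdiff:
  assumes "0 \<le> h" and "\<And>y. 0 < y \<Longrightarrow> (f has_real_derivative f' y) (at y)" and "0 < x"
  shows "(neg_fdiff h m f has_real_derivative neg_fdiff h m f' x) (at x)"
  using assms(3)
proof (induction m arbitrary: x)
  case 0
  have "neg_fdiff h 0 f = f" by (simp add: fun_eq_iff)
  then show ?case using assms(2)[OF 0] by simp
next
  case (Suc m)
  have "((\<lambda>y. neg_fdiff h m f (y + h)) has_real_derivative neg_fdiff h m f' (x + h)) (at x)"
    using Suc.IH[of "x + h"] Suc.prems assms(1) by (simp add: DERIV_shift)
  then show ?case
    using DERIV_diff[OF Suc.IH[OF Suc.prems]] by (simp add: fun_eq_iff)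
qed

lemma completely_monotone_neg_fdiff_sign:
  assumes cm: "completely_monotone \<phi>" and "0 \<le> h" and "0 < x"
  shows "0 \<le> (-1) ^ j * neg_fdiff h m ((deriv ^^ j) \<phi>) x"
  using assms(3)
proof (induction m arbitrary: j x)
  case 0
  then show ?case using cm by (simp add: completely_monotone_def)
next
  case (Suc m)
  have deriv: "((deriv ^^ j) \<phi> has_real_derivative (deriv ^^ Suc j) \<phi> y) (at y)" if "0 < y" for j y
    using cm that by (simp add: completely_monotone_def DERIV_deriv_iff_real_differentiable)
  define F where "F y = (-1) ^ j * neg_fdiff h m ((deriv ^^ j) \<phi>) y" for y
  \<comment> \<open>\<open>F\<close> is antitone: its derivative is the same expression for \<open>j + 1\<close> with the
    sign flipped, which is \<open>\<le> 0\<close> by the induction hypothesis.\<close>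
  have "F (x + h) \<le> F x"
  proof (rule DERIV_nonpos_imp_nonincreasing[of x "x + h" F])
    fix y assume "x \<le> y" "y \<le> x + h"
    then have "0 < y" using Suc.prems by simp
    then have "(F has_real_derivative (-1) ^ j * neg_fdiff h m ((deriv ^^ Suc j) \<phi>) y) (at y)"
      unfolding F_def
      by (intro DERIV_cmult has_real_derivative_neg_fdiff[OF \<open>0 \<le> h\<close> deriv])
    moreover have "(-1) ^ j * neg_fdiff h m ((deriv ^^ Suc j) \<phi>) y \<le> 0"
      using Suc.IH[of y "Suc j"] \<open>0 < y\<close> by simp
    ultimately show "\<exists>d. (F has_real_derivative d) (at y) \<and> d \<le> 0" by blast
  qed (use \<open>0 \<le> h\<close> in simp)
  then show ?case by (simp add: F_def algebra_simps)
qed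

lemma continuous_on_neg_fdiff:
  assumes "continuous_on {0..} f" and "0 \<le> h"
  shows "continuous_on {0..} (neg_fdiff h m f)"
proof (induction m)
  case 0
  have "neg_fdiff h 0 f = f" by (simp add: fun_eq_iff)
  then show ?case using assms(1) by simp
next
  case (Suc m)
  have "continuous_on {0..} (\<lambda>x. neg_fdiff h m f (x + h))"
    by (rule continuous_on_compose2[OF Suc]) (auto intro!: continuous_intros simp: assms(2))
  with Suc show ?case by (simp add: continuous_on_diff)
qed

lemma completely_monotone_neg_fdiff_nonneg:
  assumes "continuous_on {0..} \<phi>" and "completely_monotone \<phi>" and "0 \<le> h" and "0 \<le> x"
  shows "0 \<le> neg_fdiff h m \<phi> x"
proof (cases "x = 0")
  case False
  then show ?thesis
    using completely_monotone_neg_fdiff_sign[OF assms(2,3), of x 0] assms(4) by simp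
next
  case True
  have "(neg_fdiff h m \<phi> \<longlongrightarrow> neg_fdiff h m \<phi> 0) (at_right 0)"
    using continuous_on_neg_fdiff[OF assms(1,3), of m]
    by (auto simp: continuous_on_def intro: tendsto_within_subset)
  moreover have "\<forall>\<^sub>F y in at_right 0. 0 \<le> neg_fdiff h m \<phi> y"
    using completely_monotone_neg_fdiff_sign[OF assms(2,3), of _ 0]
    by (auto simp: eventually_at_right_field intro: exI[of _ 1])
  ultimately show ?thesis
    using True by (auto intro: tendsto_lowerbound)
qed

section \<open>Moments of binomial mixtures\<close>

definition moment_functional :: "(nat \<Rightarrow> real) \<Rightarrow> real poly \<Rightarrow> real" where
  "moment_functional a p = (\<Sum>i\<le>degree p. coeff p i * a i)"

lemma moment_functional_eq_sum:
  "degree p \<le> n \<Longrightarrow> moment_functional a p = (\<Sum>i\<le>n. coeff p i * a i)"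
  unfolding moment_functional_def
  by (rule sum.mono_neutral_right[symmetric]) (auto simp: coeff_eq_0)

lemma moment_functional_add:
  "moment_functional a (p + q) = moment_functional a p + moment_functional a q"
proof -
  let ?n = "max (degree p) (degree q)"
  have "degree (p + q) \<le> ?n" by (rule degree_add_le) simp_all
  then show ?thesis
    by (simp add: moment_functional_eq_sum[of _ ?n] sum.distrib algebra_simps)
qed

lemma moment_functional_smult: "moment_functional a (smult c p) = c * moment_functional a p"
  by (simp add: moment_functional_eq_sum[OF degree_smult_le] moment_functional_def
      sum_distrib_left mult.assoc)

lemma moment_functional_diff:
  "moment_functional a (p - q) = moment_functional a p - moment_functional a q"
proof -
  have "p - q = p + smult (-1) q" by simp
  then show ?thesis by (simp only: moment_functional_add moment_functional_smult)
qed

lemma moment_functional_sum: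
  "moment_functional a (\<Sum>k\<in>A. f k) = (\<Sum>k\<in>A. moment_functional a (f k))"
  by (induction A rule: infinite_finite_induct)
    (simp_all add: moment_functional_add moment_functional_def[of _ 0])

lemma moment_functional_monom: "moment_functional a (monom c k) = c * a k"
proof -
  have "moment_functional a (monom c k) = (\<Sum>i\<le>k. coeff (monom c k) i * a i)"
    by (rule moment_functional_eq_sum[OF degree_monom_le])
  also have "\<dots> = (\<Sum>i\<le>k. if k = i then c * a k else 0)"
    by (rule sum.cong) (auto simp: coeff_monom)
  finally show ?thesis by simp
qed

lemma moment_functional_neg_fdiff:
  "moment_functional (\<lambda>i. f (real i * h)) (monom 1 k * [:1, -1:] ^ m) = neg_fdiff h m f (real k * h)"
proof (induction m arbitrary: k)
  case 0
  then show ?case by (simp add: moment_functional_monom)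
next
  case (Suc m)
  have step: "monom (1::real) k * [:1, -1:] ^ Suc m
      = monom 1 k * [:1, -1:] ^ m - monom 1 (Suc k) * [:1, -1:] ^ m"
    by (rule poly_eq_poly_eq_iff[THEN iffD1]) (simp add: fun_eq_iff poly_monom algebra_simps)
  show ?case
    unfolding step moment_functional_diff Suc.IH by (simp add: algebra_simps)
qed

lemma sum_choose_bernstein_basis:
  assumes "j \<le> N"
  shows "(\<Sum>k\<le>N. real (N choose k) * real (k choose j) * x ^ k * (1 - x) ^ (N - k))
    = real (N choose j) * (x::real) ^ j"
proof -
  let ?F = "\<lambda>k. real (N choose k) * real (k choose j) * x ^ k * (1 - x) ^ (N - k)"
  have "(\<Sum>k\<le>N. ?F k) = (\<Sum>k\<in>{j..N}. ?F k)"
    by (rule sum.mono_neutral_right) auto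
  also have "\<dots> = (\<Sum>i\<le>N - j. ?F (i + j))"
    using assms by (intro sum.reindex_bij_witness[of _ "\<lambda>i. i + j" "\<lambda>k. k - j"]) auto
  also have "\<dots> = (\<Sum>i\<le>N - j. real (N choose j) * x ^ j
      * (real (N - j choose i) * x ^ i * (1 - x) ^ (N - j - i)))"
  proof (rule sum.cong)
    fix i assume "i \<in> {..N - j}"
    then have "real (N choose (i + j)) * real ((i + j) choose j)
        = real (N choose j) * real ((N - j) choose i)"
      using choose_mult[of j "i + j" N] assms by (simp flip: of_nat_mult)
    moreover have "N - (i + j) = N - j - i" by simp
    ultimately show "?F (i + j) = real (N choose j) * x ^ j
        * (real (N - j choose i) * x ^ i * (1 - x) ^ (N - j - i))"
      by (simp add: power_add algebra_simps)
  qed simp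
  also have "\<dots> = real (N choose j) * x ^ j * (x + (1 - x)) ^ (N - j)"
    by (subst binomial_ring) (simp add: sum_distrib_left atLeast0AtMost)
  finally show ?thesis by simp
qed

text \<open>The polynomial identity behind \<open>sum_choose_bernstein_basis\<close>, read through the
  functional that sends \<open>x\<^sup>i\<close> to \<open>f (i h)\<close>.\<close>
lemma sum_choose_neg_fdiff:
  assumes "j \<le> N"
  shows "(\<Sum>k\<le>N. real (N choose k) * real (k choose j) * neg_fdiff h (N - k) f (real k * h))
    = real (N choose j) * f (real j * h)"
proof -
  let ?L = "moment_functional (\<lambda>i. f (real i * h))"
  have "(\<Sum>k\<le>N. smult (real (N choose k) * real (k choose j)) (monom 1 k * [:1, -1:] ^ (N - k)))
      = smult (real (N choose j)) (monom 1 j)"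
    by (rule poly_eq_poly_eq_iff[THEN iffD1])
      (use sum_choose_bernstein_basis[OF assms] in \<open>simp add: fun_eq_iff poly_sum poly_monom mult.assoc\<close>)
  then have "?L (\<Sum>k\<le>N. smult (real (N choose k) * real (k choose j)) (monom 1 k * [:1, -1:] ^ (N - k)))
      = ?L (smult (real (N choose j)) (monom 1 j))"
    by simp
  then show ?thesis
    by (simp add: moment_functional_sum moment_functional_smult moment_functional_neg_fdiff
        moment_functional_monom)
qed

lemma choose_Suc_ratio:
  shows "real (k choose Suc j) / real (N choose Suc j)
    = real (k choose j) / real (N choose j) * (real (k - j) / real (N - j))"
proof -
  have rec: "real (Suc j) * real (n choose Suc j) = real (n - j) * real (n choose j)" for n
  proof -
    have "Suc j * (n choose Suc j) = n * ((n - 1) choose j)" by (rule binomial_absorption)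
    also have "\<dots> = (n - j) * (n choose j)" by (rule binomial_absorb_comp[symmetric])
    finally show ?thesis by (metis of_nat_mult)
  qed
  have div: "real (n choose Suc j) = real (n - j) * real (n choose j) / real (Suc j)" for n
    using rec[of n] by (simp add: field_simps)
  show ?thesis unfolding div[of k] div[of N] by (simp add: mult.commute)
qed

lemma diff_ratio_bounds:
  assumes "k \<le> N" and "j < N"
  shows "real k / N - real j / N \<le> real (k - j) / real (N - j)"
    and "real (k - j) / real (N - j) \<le> real k / N"
proof -
  have "(real k - real j) / N \<le> real (k - j) / real (N - j)"
  proof (cases "j \<le> k")
    case True
    then show ?thesis using assms by (simp add: of_nat_diff divide_left_mono)
  next
    case False
    then show ?thesis by (simp add: divide_nonpos_nonneg)
  qed
  then show "real k / N - real j / N \<le> real (k - j) / real (N - j)"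
    by (simp add: diff_divide_distrib)
  show "real (k - j) / real (N - j) \<le> real k / N"
  proof (cases "j \<le> k")
    case True
    have "(real k - real j) * N \<le> real k * (real N - real j)"
      using mult_left_mono[of "real k" "real N" "real j"] assms(1) by (simp add: algebra_simps)
    then show ?thesis
      using True assms by (simp add: of_nat_diff divide_le_eq le_divide_eq mult.commute)
  next
    case False
    then show ?thesis by simp
  qed
qed

lemma mult_power_approx_Suc:
  fixes x r q :: real and N :: nat
  assumes x: "0 \<le> x" "x \<le> 1" and r: "0 \<le> r" "x ^ j - real j ^ 2 / N \<le> r" "r \<le> x ^ j"
    and q: "0 \<le> q" "x - real j / N \<le> q" "q \<le> x"
  shows "x ^ Suc j - real (Suc j) ^ 2 / N \<le> r * q" and "r * q \<le> x ^ Suc j"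
proof -
  have "r \<le> 1" using r(3) power_le_one[OF x, of j] by linarith
  show "r * q \<le> x ^ Suc j"
    using mult_mono[OF r(3) q(3)] x q(1) by (simp add: mult.commute)
  have "r * real j + real j ^ 2 * x \<le> real (Suc j) ^ 2"
  proof -
    have "r * real j \<le> real j" using r(1) \<open>r \<le> 1\<close> by (intro mult_left_le_one_le) simp_all
    moreover have "real j ^ 2 * x \<le> real j ^ 2" using x(2) by (simp add: mult_left_le)
    ultimately show ?thesis by (simp add: power2_eq_square algebra_simps)
  qed
  then have "x ^ Suc j - real (Suc j) ^ 2 / N \<le> x ^ Suc j - (r * real j + real j ^ 2 * x) / N"
    by (simp add: divide_right_mono)
  also have "\<dots> = (x ^ j - real j ^ 2 / N) * x - r * (real j / N)"
    by (cases "N = 0") (simp_all add: field_simps)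
  also have "\<dots> \<le> r * x - r * (real j / N)"
    using mult_right_mono[OF r(2) x(1)] by simp
  also have "\<dots> \<le> r * q"
    using mult_left_mono[OF q(2) r(1)] by (simp add: right_diff_distrib)
  finally show "x ^ Suc j - real (Suc j) ^ 2 / N \<le> r * q" .
qed

text \<open>\<open>(k choose j) / (N choose j)\<close> and \<open>(k / N) ^ j\<close> are the chances that \<open>j\<close> draws from
  \<open>N\<close> balls, without and with replacement, all land in a fixed set of \<open>k\<close> balls.\<close>
lemma choose_ratio_bounds:
  assumes "k \<le> N" and "j \<le> N"
  shows "(real k / N) ^ j - real j ^ 2 / N \<le> real (k choose j) / real (N choose j)"
    and "real (k choose j) / real (N choose j) \<le> (real k / N) ^ j"
proof -
  have x: "0 \<le> real k / N" "real k / N \<le> 1" using assms(1) by (auto simp: divide_le_eq_1)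
  have "(real k / N) ^ j - real j ^ 2 / N \<le> real (k choose j) / real (N choose j)
      \<and> real (k choose j) / real (N choose j) \<le> (real k / N) ^ j"
    using assms(2)
  proof (induction j)
    case 0
    then show ?case by simp
  next
    case (Suc j)
    define r where "r = real (k choose j) / real (N choose j)"
    define q where "q = real (k - j) / real (N - j)"
    have "j < N" using Suc.prems by simp
    then have IH: "(real k / N) ^ j - real j ^ 2 / N \<le> r" "r \<le> (real k / N) ^ j"
      using Suc.IH by (simp_all add: r_def)
    have "0 \<le> r" "0 \<le> q" by (simp_all add: r_def q_def)
    from mult_power_approx_Suc[OF x \<open>0 \<le> r\<close> IH \<open>0 \<le> q\<close>
        diff_ratio_bounds[OF assms(1) \<open>j < N\<close>, folded q_def]]
    show ?case by (simp add: r_def q_def choose_Suc_ratio)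
  qed
  then show "(real k / N) ^ j - real j ^ 2 / N \<le> real (k choose j) / real (N choose j)"
    and "real (k choose j) / real (N choose j) \<le> (real k / N) ^ j" by simp_all
qed

lemma moment_estimate:
  fixes W c :: "nat \<Rightarrow> real"
  assumes W: "\<And>k. 0 \<le> W k" "(\<Sum>k\<le>N. W k) = 1" "\<And>k. W k = real (N choose k) * c k"
    and moments: "(\<Sum>k\<le>N. real (N choose k) * real (k choose j) * c k) = real (N choose j) * A"
    and "j \<le> N"
  shows "\<bar>(\<Sum>k\<le>N. W k * (real k / N) ^ j) - A\<bar> \<le> real j ^ 2 / N"
proof -
  let ?d = "\<lambda>k. (real k / N) ^ j - real (k choose j) / real (N choose j)"
  have "A = (\<Sum>k\<le>N. W k * (real (k choose j) / real (N choose j)))"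
    using moments \<open>j \<le> N\<close>
    by (simp add: W(3) sum_divide_distrib[symmetric] algebra_simps)
  then have eq: "(\<Sum>k\<le>N. W k * (real k / N) ^ j) - A = (\<Sum>k\<le>N. W k * ?d k)"
    by (simp add: sum_subtractf algebra_simps)
  have "0 \<le> (\<Sum>k\<le>N. W k * ?d k)"
    using choose_ratio_bounds(2) \<open>j \<le> N\<close> W(1) by (intro sum_nonneg mult_nonneg_nonneg) auto
  moreover have "(\<Sum>k\<le>N. W k * ?d k) \<le> (\<Sum>k\<le>N. W k * (real j ^ 2 / N))"
    using choose_ratio_bounds(1) \<open>j \<le> N\<close> W(1)
    by (intro sum_mono mult_left_mono) (auto simp: algebra_simps)
  moreover have "(\<Sum>k\<le>N. W k * (real j ^ 2 / N)) = real j ^ 2 / N"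
    by (simp only: W(2) flip: sum_distrib_right)
  ultimately show ?thesis
    unfolding eq abs_le_iff by linarith
qed

section \<open>Bernstein's theorem\<close>

definition clamp01 :: "real \<Rightarrow> real" where
  "clamp01 x = max 0 (min 1 x)"

text \<open>For \<open>0 < x \<le> 1\<close>, \<open>dyadic_root_power m j x = x powr (j / 2 ^ m)\<close>; clamping to \<open>[0, 1]\<close>
  makes it a bounded continuous test function on the real line.\<close>
definition dyadic_root_power :: "nat \<Rightarrow> nat \<Rightarrow> real \<Rightarrow> real" where
  "dyadic_root_power m j x = root (2 ^ m) (clamp01 x) ^ j"

lemma clamp01_bounds: "0 \<le> clamp01 x" "clamp01 x \<le> 1"
  by (auto simp: clamp01_def)

lemma clamp01_id: "0 \<le> x \<Longrightarrow> x \<le> 1 \<Longrightarrow> clamp01 x = x"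
  by (simp add: clamp01_def)

lemma isCont_clamp01: "isCont clamp01 x"
  unfolding clamp01_def by (intro continuous_intros)

lemma borel_measurable_clamp01 [measurable]: "clamp01 \<in> borel_measurable borel"
  by (intro borel_measurable_continuous_onI continuous_at_imp_continuous_on ballI isCont_clamp01)

lemma ln_clamp01_nonpos: "ln (clamp01 x) \<le> 0"
  using clamp01_bounds[of x] by (cases "clamp01 x = 0") simp_all

lemma isCont_dyadic_root_power: "isCont (dyadic_root_power m j) x"
  unfolding dyadic_root_power_def
  by (intro isCont_power isCont_o2[OF isCont_clamp01 isCont_real_root])

lemma norm_dyadic_root_power_le: "norm (dyadic_root_power m j x) \<le> 1"
proof -
  have "0 \<le> root (2 ^ m) (clamp01 x)" "root (2 ^ m) (clamp01 x) \<le> 1"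
    using clamp01_bounds[of x] by (auto simp: real_root_le_1_iff)
  then show ?thesis unfolding dyadic_root_power_def by (simp add: power_le_one abs_le_iff)
qed

lemma borel_measurable_dyadic_root_power [measurable]:
  "dyadic_root_power m j \<in> borel_measurable borel"
  by (intro borel_measurable_continuous_onI continuous_at_imp_continuous_on ballI
      isCont_dyadic_root_power)

lemma dyadic_root_power_power:
  assumes "0 \<le> z" "z \<le> 1" "m \<le> n"
  shows "dyadic_root_power m j (z ^ 2 ^ n) = z ^ (j * 2 ^ (n - m))"
proof -
  have "z ^ 2 ^ n = (z ^ 2 ^ (n - m)) ^ 2 ^ m"
    using assms(3) by (simp flip: power_mult power_add)
  moreover have "clamp01 (z ^ 2 ^ n) = z ^ 2 ^ n"
    using assms by (simp add: clamp01_id power_le_one)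
  ultimately have "root (2 ^ m) (clamp01 (z ^ 2 ^ n)) = z ^ 2 ^ (n - m)"
    using assms(1) by (simp add: real_root_pos2)
  then show ?thesis
    by (simp add: dyadic_root_power_def power_mult[symmetric] mult.commute)
qed

lemma dyadic_root_power_eq_exp:
  "0 < clamp01 x \<Longrightarrow> dyadic_root_power m j x = exp (real j / 2 ^ m * ln (clamp01 x))"
  by (simp add: dyadic_root_power_def root_powr_inverse powr_def exp_of_nat_mult[symmetric])

lemma completely_monotone_binomial_weights:
  fixes \<phi> :: "real \<Rightarrow> real" and N :: nat
  assumes cont: "continuous_on {0..} \<phi>" and cm: "completely_monotone \<phi>" and "\<phi> 0 = 1"
    and "0 \<le> h"
  defines "W \<equiv> \<lambda>k. real (N choose k) * neg_fdiff h (N - k) \<phi> (real k * h)"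
  shows "0 \<le> W k" and "(\<Sum>k\<le>N. W k) = 1"
    and "j \<le> N \<Longrightarrow> \<bar>(\<Sum>k\<le>N. W k * (real k / N) ^ j) - \<phi> (real j * h)\<bar> \<le> real j ^ 2 / N"
proof -
  show W_nonneg: "0 \<le> W k" for k
    unfolding W_def
    by (intro mult_nonneg_nonneg completely_monotone_neg_fdiff_nonneg[OF cont cm \<open>0 \<le> h\<close>])
      (simp_all add: \<open>0 \<le> h\<close>)
  show W_sum: "(\<Sum>k\<le>N. W k) = 1"
    using sum_choose_neg_fdiff[of 0 N h \<phi>] \<open>\<phi> 0 = 1\<close> by (simp add: W_def)
  show "j \<le> N \<Longrightarrow> \<bar>(\<Sum>k\<le>N. W k * (real k / N) ^ j) - \<phi> (real j * h)\<bar> \<le> real j ^ 2 / N"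
    by (rule moment_estimate[OF W_nonneg W_sum _ sum_choose_neg_fdiff]) (simp_all add: W_def)
qed

lemma finite_discrete_distribution:
  fixes W y :: "nat \<Rightarrow> real"
  assumes W: "\<And>k. 0 \<le> W k" "(\<Sum>k\<le>N. W k) = 1" and y: "\<And>k. y k \<in> {0..1}"
  obtains \<sigma> where "real_distribution \<sigma>" and "measure \<sigma> {-1<..1} = 1"
    and "\<And>f. f \<in> borel_measurable borel \<Longrightarrow> (\<integral>x. f x \<partial>\<sigma>) = (\<Sum>k\<le>N. W k * f (y k))"
proof -
  define w where "w k = (if k \<le> N then W k else 0)" for k
  have w_nonneg: "0 \<le> w k" for k by (simp add: w_def W)
  have "(\<integral>\<^sup>+ k. ennreal (w k) \<partial>count_space UNIV) = (\<Sum>k\<le>N. ennreal (w k))"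
    by (rule nn_integral_count_space') (auto simp: w_def)
  also have "\<dots> = 1" using W by (simp add: w_def sum_ennreal)
  finally have pmf: "pmf (embed_pmf w) k = w k" for k
    by (rule pmf_embed_pmf[OF w_nonneg])
  define \<sigma> where "\<sigma> = distr (measure_pmf (embed_pmf w)) borel y"
  show thesis
  proof
    show "real_distribution \<sigma>"
      by (auto simp: \<sigma>_def real_distribution_def real_distribution_axioms_def
          intro!: measure_pmf.prob_space_distr)
    have "y k \<in> {-1<..1}" for k using y[of k] by simp
    then have "y -` {-1<..1} = UNIV" by blast
    then show "measure \<sigma> {-1<..1} = 1" by (simp add: \<sigma>_def measure_distr)
    fix f :: "real \<Rightarrow> real" assume "f \<in> borel_measurable borel"
    then have "(\<integral>x. f x \<partial>\<sigma>) = (\<integral>k. f (y k) \<partial>measure_pmf (embed_pmf w))"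
      by (simp add: \<sigma>_def integral_distr)
    also have "\<dots> = (\<Sum>k\<le>N. f (y k) * pmf (embed_pmf w) k)"
      by (rule integral_measure_pmf_real) (auto simp: set_pmf_iff pmf w_def split: if_splits)
    finally show "(\<integral>x. f x \<partial>\<sigma>) = (\<Sum>k\<le>N. W k * f (y k))"
      by (simp add: pmf w_def mult.commute)
  qed
qed

lemma dyadic_exponent_bounds:
  assumes "m \<le> n" and "j \<le> n"
  shows "j * 2 ^ (n - m) \<le> 8 ^ n"
    and "real (j * 2 ^ (n - m)) ^ 2 / 8 ^ n \<le> real j ^ 2 / 2 ^ n"
proof -
  have "j < 2 ^ n" using assms(2) less_exp[of n] by linarith
  also have "(2::nat) ^ n \<le> 4 ^ n" by (rule power_mono) simp_all
  finally have "j \<le> 4 ^ n" by simp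
  moreover have "(2::nat) ^ (n - m) \<le> 2 ^ n" by simp
  ultimately have "j * 2 ^ (n - m) \<le> 4 ^ n * 2 ^ n" by (intro mult_mono) simp_all
  then show "j * 2 ^ (n - m) \<le> 8 ^ n" by (simp flip: power_mult_distrib)
  have "real (j * 2 ^ (n - m)) ^ 2 = real j ^ 2 * real ((2::nat) ^ (n - m)) ^ 2"
    by (simp add: power_mult_distrib)
  also have "\<dots> \<le> real j ^ 2 * (2 ^ n) ^ 2"
    by (intro mult_left_mono power_mono) simp_all
  finally have "real (j * 2 ^ (n - m)) ^ 2 / 8 ^ n \<le> real j ^ 2 * (2 ^ n) ^ 2 / 8 ^ n"
    by (rule divide_right_mono) simp
  moreover have "(8::real) ^ n = (2 ^ n) ^ 2 * 2 ^ n"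
    by (simp add: power2_eq_square flip: power_mult_distrib)
  ultimately show "real (j * 2 ^ (n - m)) ^ 2 / 8 ^ n \<le> real j ^ 2 / 2 ^ n" by simp
qed

lemma completely_monotone_dyadic_level:
  fixes \<phi> :: "real \<Rightarrow> real" and n :: nat
  assumes cont: "continuous_on {0..} \<phi>" and cm: "completely_monotone \<phi>" and "\<phi> 0 = 1"
  shows "\<exists>\<sigma>. real_distribution \<sigma> \<and> measure \<sigma> {-1<..1} = 1 \<and> (\<forall>m j. m \<le> n \<and> j \<le> n \<longrightarrow>
      \<bar>(\<integral>x. dyadic_root_power m j x \<partial>\<sigma>) - \<phi> (real j / 2 ^ m)\<bar> \<le> real j ^ 2 / 2 ^ n)"
proof -
  \<comment> \<open>Step \<open>h = 1 / 2 ^ n\<close>, \<open>N = 8 ^ n\<close> binomial weights and atoms \<open>(k / N) ^ 2 ^ n\<close>: the weights'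
    \<open>J\<close>-th moment approximates \<open>\<phi> (J h)\<close>, and \<open>J = j * 2 ^ (n - m)\<close> gives \<open>J h = j / 2 ^ m\<close>.\<close>
  define N :: nat where "N = 8 ^ n"
  define W where "W k = real (N choose k) * neg_fdiff (1 / 2 ^ n) (N - k) \<phi> (real k * (1 / 2 ^ n))"
    for k
  define y where "y k = (min 1 (real k / N)) ^ 2 ^ n" for k
  have "(0::real) \<le> 1 / 2 ^ n" by simp
  note weights = completely_monotone_binomial_weights[OF cont cm \<open>\<phi> 0 = 1\<close> this, where N = N,
      folded W_def]
  have "y k \<in> {0..1}" for k by (simp add: y_def power_le_one)
  then obtain \<sigma> where \<sigma>: "real_distribution \<sigma>" "measure \<sigma> {-1<..1} = 1"
    "\<And>f. f \<in> borel_measurable borel \<Longrightarrow> (\<integral>x. f x \<partial>\<sigma>) = (\<Sum>k\<le>N. W k * f (y k))"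
    using finite_discrete_distribution[where W = W and y = y and N = N] weights(1,2) by blast
  show ?thesis
  proof (intro exI[of _ \<sigma>] conjI \<sigma>(1,2) allI impI, elim conjE)
    fix m j assume "m \<le> n" "j \<le> n"
    define J where "J = j * 2 ^ (n - m)"
    have J: "J \<le> N" "real J ^ 2 / N \<le> real j ^ 2 / 2 ^ n"
      using dyadic_exponent_bounds[OF \<open>m \<le> n\<close> \<open>j \<le> n\<close>] by (simp_all add: J_def N_def)
    have "dyadic_root_power m j (y k) = (real k / N) ^ J" if "k \<le> N" for k
      using that \<open>m \<le> n\<close> dyadic_root_power_power[of "real k / N" m n j]
      by (simp add: y_def J_def N_def)
    then have "(\<integral>x. dyadic_root_power m j x \<partial>\<sigma>) = (\<Sum>k\<le>N. W k * (real k / N) ^ J)"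
      by (simp add: \<sigma>(3))
    moreover have "real J * (1 / 2 ^ n) = real j / 2 ^ m"
    proof -
      have "(2::real) ^ (n - m) = 2 ^ n / 2 ^ m" using \<open>m \<le> n\<close> by (simp add: power_diff)
      then show ?thesis by (simp add: J_def)
    qed
    ultimately show "\<bar>(\<integral>x. dyadic_root_power m j x \<partial>\<sigma>) - \<phi> (real j / 2 ^ m)\<bar> \<le> real j ^ 2 / 2 ^ n"
      using weights(3)[OF J(1)] J(2) by simp
  qed
qed

lemma completely_monotone_dyadic_approximation:
  fixes \<phi> :: "real \<Rightarrow> real"
  assumes "continuous_on {0..} \<phi>" and "completely_monotone \<phi>" and "\<phi> 0 = 1"
  obtains \<sigma> where "\<And>n. real_distribution (\<sigma> n)" and "\<And>n. measure (\<sigma> n) {-1<..1} = 1"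
    and "\<And>m j. (\<lambda>n. \<integral>x. dyadic_root_power m j x \<partial>\<sigma> n) \<longlonglongrightarrow> \<phi> (real j / 2 ^ m)"
proof -
  let ?P = "\<lambda>n \<sigma>. real_distribution \<sigma> \<and> measure \<sigma> {-1<..1} = 1 \<and> (\<forall>m j. m \<le> n \<and> j \<le> n \<longrightarrow>
      \<bar>(\<integral>x. dyadic_root_power m j x \<partial>\<sigma>) - \<phi> (real j / 2 ^ m)\<bar> \<le> real j ^ 2 / 2 ^ n)"
  have "\<exists>\<sigma>. ?P n \<sigma>" for n
    by (rule completely_monotone_dyadic_level[OF assms])
  from choice[OF allI[OF this]] obtain \<sigma> where "\<forall>n. ?P n (\<sigma> n)" ..
  then have \<sigma>: "?P n (\<sigma> n)" for n by blast
  show thesis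
  proof (rule that)
    show "real_distribution (\<sigma> n)" "measure (\<sigma> n) {-1<..1} = 1" for n
      using \<sigma>[of n] by simp_all
    show "(\<lambda>n. \<integral>x. dyadic_root_power m j x \<partial>\<sigma> n) \<longlonglongrightarrow> \<phi> (real j / 2 ^ m)" for m j
    proof (rule LIM_zero_cancel, rule Lim_null_comparison)
      show "\<forall>\<^sub>F n in sequentially.
          norm ((\<integral>x. dyadic_root_power m j x \<partial>\<sigma> n) - \<phi> (real j / 2 ^ m)) \<le> real j ^ 2 / 2 ^ n"
        using \<sigma> by (intro eventually_sequentiallyI[of "max m j"]) simp
    qed (rule LIMSEQ_divide_realpow_zero, simp)
  qed
qed

lemma completely_monotone_dyadic_moment_distribution:
  fixes \<phi> :: "real \<Rightarrow> real"
  assumes "continuous_on {0..} \<phi>" and "completely_monotone \<phi>" and "\<phi> 0 = 1"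
  obtains M where "real_distribution M"
    and "\<And>m j. (\<integral>x. dyadic_root_power m j x \<partial>M) = \<phi> (real j / 2 ^ m)"
proof -
  obtain \<sigma> where \<sigma>: "\<And>n. real_distribution (\<sigma> n)" "\<And>n. measure (\<sigma> n) {-1<..1} = 1"
    and lim: "\<And>m j. (\<lambda>n. \<integral>x. dyadic_root_power m j x \<partial>\<sigma> n) \<longlonglongrightarrow> \<phi> (real j / 2 ^ m)"
    using completely_monotone_dyadic_approximation[OF assms] by blast
  have "tight \<sigma>"
    unfolding tight_def
  proof (intro conjI allI impI)
    fix \<epsilon> :: real assume "0 < \<epsilon>"
    then show "\<exists>a b. a < b \<and> (\<forall>n. 1 - \<epsilon> < measure (\<sigma> n) {a<..b})"
      by (intro exI[of _ "-1"] exI[of _ 1]) (simp add: \<sigma>)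
  qed (rule \<sigma>)
  from tight_imp_convergent_subsubsequence[OF this strict_mono_id] obtain r M
    where r: "strict_mono r" and M: "real_distribution M" and conv: "weak_conv_m (\<sigma> \<circ> id \<circ> r) M"
    by blast
  show thesis
  proof (rule that[OF M])
    fix m j
    have "(\<lambda>n. \<integral>x. dyadic_root_power m j x \<partial>(\<sigma> \<circ> id \<circ> r) n) \<longlonglongrightarrow> (\<integral>x. dyadic_root_power m j x \<partial>M)"
      by (rule weak_conv_imp_integral_bdd_continuous_conv[OF _ M conv isCont_dyadic_root_power
          norm_dyadic_root_power_le]) (simp add: \<sigma>)
    moreover have "(\<lambda>n. \<integral>x. dyadic_root_power m j x \<partial>(\<sigma> \<circ> id \<circ> r) n) \<longlonglongrightarrow> \<phi> (real j / 2 ^ m)"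
      using LIMSEQ_subseq_LIMSEQ[OF lim r] by (simp add: comp_def)
    ultimately show "(\<integral>x. dyadic_root_power m j x \<partial>M) = \<phi> (real j / 2 ^ m)"
      by (rule LIMSEQ_unique)
  qed
qed

text \<open>As \<open>m \<rightarrow> \<infinity>\<close>, \<open>dyadic_root_power m 1\<close> increases to the indicator of \<open>clamp01 x > 0\<close>,
  while its integrals \<open>\<phi> (1 / 2 ^ m)\<close> tend to \<open>\<phi> 0 = 1\<close>: there is no mass at \<open>clamp01 x = 0\<close>.\<close>
lemma dyadic_moments_AE_clamp01_pos:
  fixes \<phi> :: "real \<Rightarrow> real"
  assumes M: "real_distribution M"
    and moments: "\<And>m. (\<integral>x. dyadic_root_power m 1 x \<partial>M) = \<phi> (1 / 2 ^ m)"
    and cont: "continuous_on {0..} \<phi>" and "\<phi> 0 = 1"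
  shows "AE x in M. 0 < clamp01 x"
proof -
  interpret real_distribution M by (rule M)
  have "(\<lambda>m. \<integral>x. dyadic_root_power m 1 x \<partial>M) \<longlonglongrightarrow> (\<integral>x. indicator {x. 0 < clamp01 x} x \<partial>M)"
  proof (rule integral_dominated_convergence[where w = "\<lambda>x. 1"])
    show "AE x in M. (\<lambda>m. dyadic_root_power m 1 x) \<longlonglongrightarrow> indicator {x. 0 < clamp01 x} x"
    proof (rule AE_I2)
      fix x
      show "(\<lambda>m. dyadic_root_power m 1 x) \<longlonglongrightarrow> indicator {x. 0 < clamp01 x} x"
      proof (cases "0 < clamp01 x")
        case True
        have "strict_mono (\<lambda>m::nat. (2::nat) ^ m)" by (rule strict_monoI) simp
        from LIMSEQ_subseq_LIMSEQ[OF LIMSEQ_root_const[OF True] this] True show ?thesis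
          by (simp add: dyadic_root_power_def comp_def)
      next
        case False
        then have "clamp01 x = 0" using clamp01_bounds[of x] by simp
        then show ?thesis by (simp add: dyadic_root_power_def)
      qed
    qed
    show "AE x in M. norm (dyadic_root_power m 1 x) \<le> 1" for m
      by (intro AE_I2 norm_dyadic_root_power_le)
  qed (simp_all add: measurable_cong_sets[OF events_eq_borel refl])
  moreover have "(\<lambda>m. \<integral>x. dyadic_root_power m 1 x \<partial>M) \<longlonglongrightarrow> 1"
  proof -
    have "(\<lambda>m. 1 / (2::real) ^ m) \<longlonglongrightarrow> 0" by (rule LIMSEQ_divide_realpow_zero) simp
    then have "(\<lambda>m. \<phi> (1 / 2 ^ m)) \<longlonglongrightarrow> \<phi> 0"
      by (rule continuous_on_tendsto_compose[OF cont]) auto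
    then show ?thesis using moments \<open>\<phi> 0 = 1\<close> by simp
  qed
  ultimately have "measure M {x. 0 < clamp01 x} = 1"
    using LIMSEQ_unique by (simp add: integral_indicator)
  from AE_prob_1[OF this] show ?thesis by simp
qed

lemma dyadic_approximation_tendsto:
  assumes "0 \<le> t"
  shows "(\<lambda>n. real (nat \<lfloor>t * 2 ^ n\<rfloor>) / 2 ^ n) \<longlonglongrightarrow> t"
proof (rule LIM_zero_cancel, rule Lim_null_comparison)
  show "(\<lambda>n. 1 / (2::real) ^ n) \<longlonglongrightarrow> 0" by (rule LIMSEQ_divide_realpow_zero) simp
  show "\<forall>\<^sub>F n in sequentially. norm (real (nat \<lfloor>t * 2 ^ n\<rfloor>) / 2 ^ n - t) \<le> 1 / 2 ^ n"
  proof (rule always_eventually, rule allI)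
    fix n
    have "real (nat \<lfloor>t * 2 ^ n\<rfloor>) = real_of_int \<lfloor>t * 2 ^ n\<rfloor>" using assms by simp
    moreover have "t * 2 ^ n - 1 \<le> real_of_int \<lfloor>t * 2 ^ n\<rfloor>" "real_of_int \<lfloor>t * 2 ^ n\<rfloor> \<le> t * 2 ^ n"
      by linarith+
    moreover have "t - 1 / 2 ^ n = (t * 2 ^ n - 1) / 2 ^ n" "t = t * 2 ^ n / 2 ^ n"
      by (simp_all add: diff_divide_distrib)
    ultimately have "t - 1 / 2 ^ n \<le> real (nat \<lfloor>t * 2 ^ n\<rfloor>) / 2 ^ n"
      "real (nat \<lfloor>t * 2 ^ n\<rfloor>) / 2 ^ n \<le> t"
      by (metis divide_right_mono zero_le_power zero_le_numeral)+
    then show "norm (real (nat \<lfloor>t * 2 ^ n\<rfloor>) / 2 ^ n - t) \<le> 1 / 2 ^ n"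
      by simp
  qed
qed

lemma integral_exp_ln_clamp01:
  fixes \<phi> :: "real \<Rightarrow> real"
  assumes M: "real_distribution M" and pos: "AE x in M. 0 < clamp01 x"
    and moments: "\<And>m j. (\<integral>x. dyadic_root_power m j x \<partial>M) = \<phi> (real j / 2 ^ m)"
    and cont: "continuous_on {0..} \<phi>" and "0 \<le> t"
  shows "(\<integral>x. exp (t * ln (clamp01 x)) \<partial>M) = \<phi> t"
proof -
  interpret real_distribution M by (rule M)
  define t' where "t' n = real (nat \<lfloor>t * 2 ^ n\<rfloor>) / 2 ^ n" for n :: nat
  have t': "0 \<le> t' n" for n by (simp add: t'_def)
  have meas: "(\<lambda>x. exp (s * ln (clamp01 x))) \<in> borel_measurable M" for s
    by (simp add: measurable_cong_sets[OF events_eq_borel refl])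
  have "(\<integral>x. exp (t' n * ln (clamp01 x)) \<partial>M) = \<phi> (t' n)" for n
  proof -
    have "(\<integral>x. exp (t' n * ln (clamp01 x)) \<partial>M) = (\<integral>x. dyadic_root_power n (nat \<lfloor>t * 2 ^ n\<rfloor>) x \<partial>M)"
    proof (rule integral_cong_AE)
      show "AE x in M. exp (t' n * ln (clamp01 x)) = dyadic_root_power n (nat \<lfloor>t * 2 ^ n\<rfloor>) x"
        using pos by eventually_elim (simp add: t'_def dyadic_root_power_eq_exp)
    qed (simp_all add: meas measurable_cong_sets[OF events_eq_borel refl])
    then show ?thesis by (simp add: moments t'_def)
  qed
  moreover have "(\<lambda>n. \<integral>x. exp (t' n * ln (clamp01 x)) \<partial>M) \<longlonglongrightarrow> (\<integral>x. exp (t * ln (clamp01 x)) \<partial>M)"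
  proof (rule integral_dominated_convergence[where w = "\<lambda>x. 1"])
    show "AE x in M. norm (exp (t' n * ln (clamp01 x))) \<le> 1" for n
      by (simp add: mult_nonneg_nonpos[OF t' ln_clamp01_nonpos])
    show "AE x in M. (\<lambda>n. exp (t' n * ln (clamp01 x))) \<longlonglongrightarrow> exp (t * ln (clamp01 x))"
      unfolding t'_def by (intro AE_I2 tendsto_intros dyadic_approximation_tendsto \<open>0 \<le> t\<close>)
  qed (simp_all add: meas)
  ultimately have "(\<lambda>n. \<phi> (t' n)) \<longlonglongrightarrow> (\<integral>x. exp (t * ln (clamp01 x)) \<partial>M)"
    by simp
  moreover have "(\<lambda>n. \<phi> (t' n)) \<longlonglongrightarrow> \<phi> t"
    unfolding t'_def
    by (rule continuous_on_tendsto_compose[OF cont dyadic_approximation_tendsto])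
      (simp_all add: \<open>0 \<le> t\<close>)
  ultimately show ?thesis by (rule LIMSEQ_unique)
qed

theorem bernstein_completely_monotone:
  fixes \<phi> :: "real \<Rightarrow> real"
  assumes cont: "continuous_on {0..} \<phi>" and cm: "completely_monotone \<phi>" and "\<phi> 0 = 1"
  obtains \<rho> :: "real measure" where "prob_space \<rho>" and "sets \<rho> = sets borel"
    and "AE s in \<rho>. 0 \<le> s" and "\<And>t. 0 \<le> t \<Longrightarrow> ennreal (\<phi> t) = (\<integral>\<^sup>+ s. exp (- t * s) \<partial>\<rho>)"
proof -
  obtain M where M: "real_distribution M"
    and moments: "\<And>m j. (\<integral>x. dyadic_root_power m j x \<partial>M) = \<phi> (real j / 2 ^ m)"
    using completely_monotone_dyadic_moment_distribution[OF assms] by blast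
  interpret real_distribution M by (rule M)
  have pos: "AE x in M. 0 < clamp01 x"
    using dyadic_moments_AE_clamp01_pos[OF M _ cont \<open>\<phi> 0 = 1\<close>] moments[of _ 1] by simp
  have meas: "(\<lambda>x. - ln (clamp01 x)) \<in> measurable M borel"
    by (simp add: measurable_cong_sets[OF events_eq_borel refl])
  show thesis
  proof (rule that)
    show "prob_space (distr M borel (\<lambda>x. - ln (clamp01 x)))" by (rule prob_space_distr[OF meas])
    show "AE s in distr M borel (\<lambda>x. - ln (clamp01 x)). 0 \<le> s"
      by (subst AE_distr_iff[OF meas]) (simp_all add: ln_clamp01_nonpos)
    fix t :: real assume "0 \<le> t"
    have "(\<integral>\<^sup>+ s. exp (- t * s) \<partial>distr M borel (\<lambda>x. - ln (clamp01 x)))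
        = (\<integral>\<^sup>+ x. exp (t * ln (clamp01 x)) \<partial>M)"
      by (simp add: nn_integral_distr[OF meas])
    also have "\<dots> = ennreal (\<integral>x. exp (t * ln (clamp01 x)) \<partial>M)"
      by (intro nn_integral_eq_integral integrable_const_bound[where B = 1])
        (simp_all add: mult_nonneg_nonpos[OF \<open>0 \<le> t\<close> ln_clamp01_nonpos]
          measurable_cong_sets[OF events_eq_borel refl])
    finally show "ennreal (\<phi> t) = (\<integral>\<^sup>+ s. exp (- t * s) \<partial>distr M borel (\<lambda>x. - ln (clamp01 x)))"
      using integral_exp_ln_clamp01[OF M pos moments cont \<open>0 \<le> t\<close>] by simp
  qed simp
qed

section \<open>Shifted compound Poisson measures\<close>

definition poisson_weight :: "nat \<Rightarrow> real \<Rightarrow> real" where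
  "poisson_weight k s = exp (- s) * s ^ k / fact k"

lemma poisson_weight_nonneg: "0 \<le> s \<Longrightarrow> 0 \<le> poisson_weight k s"
  by (simp add: poisson_weight_def)

lemma poisson_weight_le_1:
  assumes "0 \<le> s"
  shows "poisson_weight k s \<le> 1"
proof -
  have "(\<Sum>n\<in>{k}. s ^ n /\<^sub>R fact n) \<le> (\<Sum>n. s ^ n /\<^sub>R fact n)"
    by (rule sum_le_suminf[OF summable_exp_generic]) (simp_all add: assms)
  then have "s ^ k / fact k \<le> exp s" by (simp add: exp_def divide_inverse mult.commute)
  then show ?thesis by (simp add: poisson_weight_def exp_minus field_simps)
qed

lemma sums_poisson_weight_power:
  "(\<lambda>k. poisson_weight k s * c ^ k) sums exp (- s * (1 - c))"
proof -
  have "(\<lambda>k. exp (- s) * ((s * c) ^ k /\<^sub>R fact k)) sums (exp (- s) * exp (s * c))"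
    by (intro sums_mult exp_converges)
  then show ?thesis
    by (simp add: poisson_weight_def power_mult_distrib field_simps mult_exp_exp)
qed

lemma borel_measurable_poisson_weight [measurable]:
  "(\<lambda>s. poisson_weight k s) \<in> borel_measurable borel"
  unfolding poisson_weight_def by measurable

text \<open>The law of \<open>S B + X\<^sub>1 + \<dots> + X\<^sub>N\<close>, where \<open>S\<close> has law \<open>\<rho>\<close>, the \<open>X\<^sub>i\<close> are
  independent with law \<open>M\<close>, and given \<open>S\<close> the number \<open>N\<close> is Poisson with mean \<open>S\<close>.\<close>
definition shifted_compound_poisson ::
  "real measure \<Rightarrow> 'a::euclidean_space \<Rightarrow> 'a measure \<Rightarrow> 'a measure" where
  "shifted_compound_poisson \<rho> B M = count_space UNIV \<bind> (\<lambda>k.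
     distr (density \<rho> (\<lambda>s. ennreal (poisson_weight k s)) \<Otimes>\<^sub>M conv_power M k) borel (\<lambda>(s, Y). s *\<^sub>R B + Y))"

lemma nn_integral_poisson_component:
  fixes B :: "'a::euclidean_space"
  assumes \<rho>: "sets \<rho> = sets borel" and M: "prob_space M" "sets M = sets borel"
    and F: "F \<in> borel_measurable borel"
  shows "(\<integral>\<^sup>+ x. F x \<partial>distr (density \<rho> (\<lambda>s. ennreal (poisson_weight k s)) \<Otimes>\<^sub>M conv_power M k)
      borel (\<lambda>(s, Y). s *\<^sub>R B + Y))
    = (\<integral>\<^sup>+ s. poisson_weight k s * (\<integral>\<^sup>+ Y. F (s *\<^sub>R B + Y) \<partial>conv_power M k) \<partial>\<rho>)"
proof -
  let ?D = "density \<rho> (\<lambda>s. ennreal (poisson_weight k s))"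
  interpret sigma_finite_measure "conv_power M k"
    by (intro prob_space_imp_sigma_finite prob_space_conv_power M)
  have sets_D: "sets (?D \<Otimes>\<^sub>M conv_power M k) = sets (borel \<Otimes>\<^sub>M borel)"
    using \<rho> by (intro sets_pair_measure_cong) simp_all
  have shift: "(\<lambda>(s, Y). s *\<^sub>R B + Y) \<in> measurable (?D \<Otimes>\<^sub>M conv_power M k) borel"
    by (subst measurable_cong_sets[OF sets_D refl]) measurable
  have F_shift: "(\<lambda>p. F (case p of (s, Y) \<Rightarrow> s *\<^sub>R B + Y)) \<in> borel_measurable (?D \<Otimes>\<^sub>M conv_power M k)"
    using measurable_compose[OF shift F] by simp
  have "(\<integral>\<^sup>+ x. F x \<partial>distr (?D \<Otimes>\<^sub>M conv_power M k) borel (\<lambda>(s, Y). s *\<^sub>R B + Y))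
      = (\<integral>\<^sup>+ p. F (case p of (s, Y) \<Rightarrow> s *\<^sub>R B + Y) \<partial>(?D \<Otimes>\<^sub>M conv_power M k))"
    by (rule nn_integral_distr[OF shift]) (simp add: F)
  also have "\<dots> = (\<integral>\<^sup>+ s. \<integral>\<^sup>+ Y. F (s *\<^sub>R B + Y) \<partial>conv_power M k \<partial>?D)"
    using nn_integral_fst[OF F_shift] by simp
  also have "\<dots> = (\<integral>\<^sup>+ s. poisson_weight k s * (\<integral>\<^sup>+ Y. F (s *\<^sub>R B + Y) \<partial>conv_power M k) \<partial>\<rho>)"
  proof (rule nn_integral_density)
    show "(\<lambda>s. ennreal (poisson_weight k s)) \<in> borel_measurable \<rho>"
      by (simp add: measurable_cong_sets[OF \<rho> refl])
    have "(\<lambda>s. \<integral>\<^sup>+ Y. F (s *\<^sub>R B + Y) \<partial>conv_power M k) \<in> borel_measurable ?D"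
      using borel_measurable_nn_integral_fst[OF F_shift] by simp
    then show "(\<lambda>s. \<integral>\<^sup>+ Y. F (s *\<^sub>R B + Y) \<partial>conv_power M k) \<in> borel_measurable \<rho>"
      by (simp add: measurable_cong_sets[OF \<rho> refl])
  qed
  finally show ?thesis .
qed

lemma nn_integral_shifted_compound_poisson:
  fixes B :: "'a::euclidean_space"
  assumes \<rho>: "prob_space \<rho>" "sets \<rho> = sets borel" "AE s in \<rho>. 0 \<le> s"
    and M: "prob_space M" "sets M = sets borel" and F: "F \<in> borel_measurable borel"
  shows "(\<integral>\<^sup>+ x. F x \<partial>shifted_compound_poisson \<rho> B M)
    = (\<Sum>k. \<integral>\<^sup>+ s. poisson_weight k s * (\<integral>\<^sup>+ Y. F (s *\<^sub>R B + Y) \<partial>conv_power M k) \<partial>\<rho>)"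
proof -
  let ?\<nu> = "\<lambda>k. distr (density \<rho> (\<lambda>s. ennreal (poisson_weight k s)) \<Otimes>\<^sub>M conv_power M k)
    borel (\<lambda>(s, Y). s *\<^sub>R B + (Y::'a))"
  have "subprob_space (?\<nu> k)" for k
  proof (rule subprob_spaceI)
    interpret prob_space "conv_power M k" by (intro prob_space_conv_power M)
    have "emeasure (?\<nu> k) (space (?\<nu> k)) = (\<integral>\<^sup>+ x. 1 \<partial>?\<nu> k)" by simp
    also have "\<dots> = (\<integral>\<^sup>+ s. poisson_weight k s \<partial>\<rho>)"
      by (subst nn_integral_poisson_component[OF \<rho>(2) M]) (simp_all add: emeasure_space_1)
    also have "\<dots> \<le> (\<integral>\<^sup>+ s. 1 \<partial>\<rho>)"
      by (rule nn_integral_mono_AE) (use \<rho>(3) in \<open>eventually_elim, simp add: poisson_weight_le_1\<close>)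
    finally show "emeasure (?\<nu> k) (space (?\<nu> k)) \<le> 1"
      by (simp add: prob_space.emeasure_space_1[OF \<rho>(1)])
  qed simp
  then have "?\<nu> \<in> measurable (count_space UNIV) (subprob_algebra borel)"
    by (auto simp: space_subprob_algebra)
  then show ?thesis
    unfolding shifted_compound_poisson_def
    by (simp add: nn_integral_bind[OF F] nn_integral_count_space_nat
        nn_integral_poisson_component[OF \<rho>(2) M F])
qed

lemma sets_shifted_compound_poisson [simp]:
  "sets (shifted_compound_poisson \<rho> B M) = sets borel"
  unfolding shifted_compound_poisson_def by (rule sets_bind) simp_all

lemma borel_measurable_indicator_etr [measurable]:
  "(\<lambda>X. ennreal (etr (- ((T::real^'n^'n) ** X))) * indicator Spsd X) \<in> borel_measurable borel"
  by measurable

lemma etr_neg_mult_shift: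
  "etr (- ((T::real^'n^'n) ** (s *\<^sub>R B + Y))) = exp (- s * trace (B ** T)) * etr (- (T ** Y))"
proof -
  have "etr (- (T ** (s *\<^sub>R B))) = exp (- s * trace (B ** T))"
    unfolding etr_neg_mult by (simp add: matrix_mult_scaleR_right trace_scaleR trace_mul_sym[of T B])
  then show ?thesis by (simp add: etr_neg_mult_add)
qed

lemma nn_integral_etr_shift_conv_power:
  fixes T B :: "real^'n^'n"
  assumes M: "prob_space M" "sets M = sets borel" "AE X in M. X \<in> Spsd"
    and "B \<in> Spsd" and "T \<in> Spsd" and "0 \<le> s"
  shows "(\<integral>\<^sup>+ Y. ennreal (etr (- (T ** (s *\<^sub>R B + Y)))) * indicator Spsd (s *\<^sub>R B + Y) \<partial>conv_power M k)
    = ennreal ((\<integral>X. etr (- (T ** X)) \<partial>M) ^ k * exp (- s * trace (B ** T)))"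
proof -
  have "AE Y in conv_power M k. Y \<in> Spsd"
    using AE_conv_power[OF M] by (simp add: zero_in_Spsd Spsd_add)
  then have "(\<integral>\<^sup>+ Y. ennreal (etr (- (T ** (s *\<^sub>R B + Y)))) * indicator Spsd (s *\<^sub>R B + Y) \<partial>conv_power M k)
      = (\<integral>\<^sup>+ Y. exp (- s * trace (B ** T)) * ennreal (etr (- (T ** Y))) \<partial>conv_power M k)"
    by (intro nn_integral_cong_AE, eventually_elim)
      (simp add: Spsd_add Spsd_scaleR assms(4,6) etr_neg_mult_shift ennreal_mult)
  also have "\<dots> = ennreal ((\<integral>X. etr (- (T ** X)) \<partial>M) ^ k * exp (- s * trace (B ** T)))"
  proof (subst nn_integral_cmult)
    show "(\<lambda>Y. ennreal (etr (- (T ** Y)))) \<in> borel_measurable (conv_power M k)"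
      by (subst measurable_cong_sets[OF sets_conv_power refl]) measurable
  qed (simp add: nn_integral_etr_conv_power[OF M \<open>T \<in> Spsd\<close>] ennreal_mult integral_nonneg
      mult.commute)
  finally show ?thesis .
qed

lemma laplace_shifted_compound_poisson:
  fixes T B :: "real^'n^'n"
  assumes \<rho>: "prob_space \<rho>" "sets \<rho> = sets borel" "AE s in \<rho>. 0 \<le> s"
    and M: "prob_space M" "sets M = sets borel" "AE X in M. X \<in> Spsd"
    and "B \<in> Spsd" and "T \<in> Spsd"
  defines "L \<equiv> \<integral>X. etr (- (T ** X)) \<partial>M"
  shows "(\<integral>\<^sup>+ X. ennreal (etr (- (T ** X))) * indicator Spsd X \<partial>shifted_compound_poisson \<rho> B M)
    = (\<integral>\<^sup>+ s. exp (- (trace (B ** T) + 1 - L) * s) \<partial>\<rho>)"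
proof -
  let ?t = "trace (B ** T)"
  have "0 \<le> L" unfolding L_def by (simp add: integral_nonneg)
  have "(\<integral>\<^sup>+ X. ennreal (etr (- (T ** X))) * indicator Spsd X \<partial>shifted_compound_poisson \<rho> B M)
      = (\<Sum>k. \<integral>\<^sup>+ s. ennreal (poisson_weight k s * L ^ k * exp (- s * ?t)) \<partial>\<rho>)"
    unfolding nn_integral_shifted_compound_poisson[OF \<rho> M(1,2) borel_measurable_indicator_etr]
    by (intro suminf_cong nn_integral_cong_AE, use \<rho>(3) in eventually_elim)
      (simp add: nn_integral_etr_shift_conv_power[OF M assms(7,8)] L_def poisson_weight_nonneg
        ennreal_mult' mult.assoc)
  also have "\<dots> = (\<integral>\<^sup>+ s. (\<Sum>k. ennreal (poisson_weight k s * L ^ k * exp (- s * ?t))) \<partial>\<rho>)"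
    by (rule nn_integral_suminf[symmetric]) (simp add: measurable_cong_sets[OF \<rho>(2) refl])
  also have "\<dots> = (\<integral>\<^sup>+ s. exp (- (?t + 1 - L) * s) \<partial>\<rho>)"
  proof (intro nn_integral_cong_AE, use \<rho>(3) in eventually_elim)
    fix s :: real assume "0 \<le> s"
    have "(\<lambda>k. poisson_weight k s * L ^ k * exp (- s * ?t)) sums (exp (- s * (1 - L)) * exp (- s * ?t))"
      by (rule sums_mult2[OF sums_poisson_weight_power])
    then have "(\<Sum>k. ennreal (poisson_weight k s * L ^ k * exp (- s * ?t)))
        = ennreal (exp (- s * (1 - L)) * exp (- s * ?t))"
      by (rule suminf_ennreal_eq[rotated]) (simp add: poisson_weight_nonneg \<open>0 \<le> s\<close> \<open>0 \<le> L\<close>)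
    then show "(\<Sum>k. ennreal (poisson_weight k s * L ^ k * exp (- s * ?t))) = exp (- (?t + 1 - L) * s)"
      by (simp add: mult_exp_exp algebra_simps)
  qed
  finally show ?thesis .
qed

section \<open>Composition with a matrix-variate Bernstein function\<close>

lemma mv_bernstein_distr_borel:
  assumes "mv_bernstein g A B \<mu>" and "prob_space \<mu>"
  shows "prob_space (distr \<mu> borel (\<lambda>X. X))" and "AE X in distr \<mu> borel (\<lambda>X. X). X \<in> Spsd"
    and "(\<lambda>X. X) \<in> measurable \<mu> borel"
proof -
  have sets: "sets \<mu> = sets (restrict_space borel Spd)"
    using assms(1) by (simp add: mv_bernstein_def)
  show meas: "(\<lambda>X. X) \<in> measurable \<mu> borel"
    by (subst measurable_cong_sets[OF sets refl]) (rule measurable_restrict_space1, simp)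
  show "prob_space (distr \<mu> borel (\<lambda>X. X))"
    by (rule prob_space.prob_space_distr[OF assms(2) meas])
  have "space \<mu> = Spd"
    using sets_eq_imp_space_eq[OF sets] by (simp add: space_restrict_space)
  then show "AE X in distr \<mu> borel (\<lambda>X. X). X \<in> Spsd"
    using Spd_subset_Spsd by (subst AE_distr_iff[OF meas]) (auto intro!: AE_I2)
qed

lemma mv_bernstein_zero_eq:
  assumes "mv_bernstein g 0 B \<mu>" and "prob_space \<mu>" and "T \<in> Spd"
  shows "g T = trace (B ** T) + 1 - (\<integral>X. etr (- (T ** X)) \<partial>distr \<mu> borel (\<lambda>X. X))"
proof -
  interpret prob_space \<mu> by (rule assms(2))
  note \<mu>' = mv_bernstein_distr_borel[OF assms(1,2)]
  have "integrable (distr \<mu> borel (\<lambda>X. X)) (\<lambda>X. etr (- (T ** X)))"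
    using integrable_etr_neg_mult[OF \<mu>'(1) _ \<mu>'(2)] assms(3) Spd_subset_Spsd by auto
  then have "integrable \<mu> (\<lambda>X. etr (- (T ** X)))"
    by (simp add: integrable_distr_eq[OF \<mu>'(3)])
  then have "(\<integral>X. 1 - etr (- (T ** X)) \<partial>\<mu>) = 1 - (\<integral>X. etr (- (T ** X)) \<partial>\<mu>)"
    by (simp add: Bochner_Integration.integral_diff prob_space)
  then show ?thesis
    using assms(1,3) by (simp add: mv_bernstein_def integral_distr[OF \<mu>'(3)] trace_def)
qed

theorem proposition2p9:
  fixes g :: "real^'p^'p \<Rightarrow> real"
    and B :: "real^'p^'p"
    and \<mu> :: "(real^'p^'p) measure"
    and \<phi> :: "real \<Rightarrow> real"
  assumes "mv_bernstein g 0 B \<mu>"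
    and "prob_space \<mu>"
    and "continuous_on {0..} \<phi>"
    and "\<forall>x\<ge>0. 0 \<le> \<phi> x"
    and "completely_monotone \<phi>"
    and "\<phi> 0 = 1"
  shows "mv_completely_monotone (\<phi> \<circ> g)"
proof -
  obtain \<rho> where \<rho>: "prob_space \<rho>" "sets \<rho> = sets borel" "AE s in \<rho>. 0 \<le> s"
    and laplace_\<phi>: "\<And>t. 0 \<le> t \<Longrightarrow> ennreal (\<phi> t) = (\<integral>\<^sup>+ s. exp (- t * s) \<partial>\<rho>)"
    using bernstein_completely_monotone[OF assms(3,5,6)] by blast
  define \<mu>' where "\<mu>' = distr \<mu> borel (\<lambda>X. X)"
  define \<nu> where "\<nu> = restrict_space (shifted_compound_poisson \<rho> B \<mu>') Spsd"
  note \<mu>' = mv_bernstein_distr_borel[OF assms(1,2), folded \<mu>'_def]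
  have B: "B \<in> Spsd" and g_nonneg: "\<And>T. T \<in> Spd \<Longrightarrow> 0 \<le> g T"
    using assms(1) by (auto simp: mv_bernstein_def)
  have "ennreal (\<phi> (g T)) = (\<integral>\<^sup>+ X. etr (- (T ** X)) \<partial>\<nu>)" if T: "T \<in> Spd" for T
  proof -
    have "(\<integral>\<^sup>+ X. etr (- (T ** X)) \<partial>\<nu>)
        = (\<integral>\<^sup>+ X. ennreal (etr (- (T ** X))) * indicator Spsd X \<partial>shifted_compound_poisson \<rho> B \<mu>')"
      by (simp add: \<nu>_def nn_integral_restrict_space)
    also have "\<dots> = (\<integral>\<^sup>+ s. exp (- g T * s) \<partial>\<rho>)"
      using laplace_shifted_compound_poisson[OF \<rho> \<mu>'(1) _ \<mu>'(2) B] T Spd_subset_Spsd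
      by (auto simp: mv_bernstein_zero_eq[OF assms(1,2) T] \<mu>'_def)
    finally show ?thesis using laplace_\<phi>[OF g_nonneg[OF T]] by simp
  qed
  moreover have "sets \<nu> = sets (restrict_space borel Spsd)"
    unfolding \<nu>_def by (rule sets_restrict_space_cong) simp
  ultimately show ?thesis
    using assms(4) g_nonneg by (auto simp: mv_completely_monotone_def)
qed

end
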